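(* Let $S_a=(X_a,X_{a0},X_{aS},U_a,\rightarrow_a,Y_a,H_a)$ and $S_b=(X_b,X_{b0},X_{bS},U_b,\rightarrow_b,Y_b,H_b)$ be metric systems with the same output set $Y_a=Y_b$ and metric $\mathbf{d}$, and let $\varepsilon,\delta\geq 0$. If $S_b\preceq_I^\varepsilon S_a$, then: if $S_b$ is not $(\delta+2\varepsilon)$-approximate initial-state opaque, then $S_a$ is not $\delta$-approximate initial-state opaque.
   Context: A system $S=(X,X_0,X_S,U,\rightarrow,Y,H)$ has states $X$, initial states $X_0\subseteq X$, secret states $X_S\subseteq X$, inputs $U$, transition relation $\rightarrow\subseteq X\times U\times X$ (write $x\xrightarrow{u}x'$), outputs $Y$ with metric $\mathbf{d}$, output map $H:X\to Y$. For $\delta\ge0$, $S$ is $\delta$-approximate initial-state opaque if for every $x_0\in X_0\cap X_S$ and finite run $x_0\xrightarrow{u_1}x_1\cdots\xrightarrow{u_n}x_n$ there exist $x_0'\in X_0\setminus X_S$ and a run $x_0'\xrightarrow{u_1'}x_1'\cdots\xrightarrow{u_n'}x_n'$ (inputs arbitrary) with $\max_{0\le i\le n}\mathbf{d}(H(x_i),H(x_i'))\le\delta$. For systems $S_1,S_2$ with the same metric output set, an $\varepsilon$-approximate initial-state opacity preserving simulation relation from $S_1$ to $S_2$ is $R\subseteq X_1\times X_2$ such that: (1a) for all $x_{10}\in X_{10}\cap X_{1S}$ there is $x_{20}\in X_{20}\cap X_{2S}$ with $(x_{10},x_{20})\in R$; (1b) for all $x_{20}\in X_{20}\setminus X_{2S}$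 there is $x_{10}\in X_{10}\setminus X_{1S}$ with $(x_{10},x_{20})\in R$; (2) $\mathbf{d}(H_1(x_1),H_2(x_2))\le\varepsilon$ for all $(x_1,x_2)\in R$; (3) for all $(x_1,x_2)\in R$: (a) for every $x_1\xrightarrow{u_1}x_1'$ there is $x_2\xrightarrow{u_2}x_2'$ with $(x_1',x_2')\in R$; (b) for every $x_2\xrightarrow{u_2}x_2'$ there is $x_1\xrightarrow{u_1}x_1'$ with $(x_1',x_2')\in R$. We write $S_1\preceq_I^\varepsilon S_2$ if such an $R$ exists. *)

theory Defs
  imports "HOL-Analysis.Analysis"
begin

text \<open>A (metric) system S = (X, X0, XS, U, transition relation, Y, H).
  Outputs live in a metric space type 'y (metric dist); Y is the output set.\<close>
record ('x, 'u, 'y) system =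
  states :: "'x set"
  init :: "'x set"
  secret :: "'x set"
  inputs :: "'u set"
  trans :: "('x \<times> 'u \<times> 'x) set"
  outs :: "'y set"
  outmap :: "'x \<Rightarrow> 'y"

definition wf_system :: "('x, 'u, 'y) system \<Rightarrow> bool" where
  "wf_system S \<longleftrightarrow> init S \<subseteq> states S \<and> secret S \<subseteq> states S \<and>
     trans S \<subseteq> states S \<times> inputs S \<times> states S \<and> outmap S ` states S \<subseteq> outs S"

text \<open>A finite run of length n: states x 0 .. x n, inputs u 1 .. u n,
  with x (i-1) --u i--> x i.\<close>
definition is_run :: "('x, 'u, 'y) system \<Rightarrow> nat \<Rightarrow> (nat \<Rightarrow> 'x) \<Rightarrow> (nat \<Rightarrow> 'u) \<Rightarrow> bool" where
  "is_run S n x u \<longleftrightarrow> (\<forall>i\<in>{1..n}. (x (i - 1), u i, x i) \<in> trans S)"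

definition approx_init_opaque :: "('x, 'u, 'y::metric_space) system \<Rightarrow> real \<Rightarrow> bool" where
  "approx_init_opaque S \<delta> \<longleftrightarrow>
     (\<forall>n x u. x 0 \<in> init S \<inter> secret S \<and> is_run S n x u \<longrightarrow>
        (\<exists>x' u'. x' 0 \<in> init S - secret S \<and> is_run S n x' u' \<and>
           (\<forall>i\<in>{0..n}. dist (outmap S (x i)) (outmap S (x' i)) \<le> \<delta>)))"

definition is_ISOP_sim ::
  "('x1, 'u1, 'y::metric_space) system \<Rightarrow> ('x2, 'u2, 'y) system \<Rightarrow> real \<Rightarrow> ('x1 \<times> 'x2) set \<Rightarrow> bool" where
  "is_ISOP_sim S1 S2 \<epsilon> R \<longleftrightarrow>
     R \<subseteq> states S1 \<times> states S2 \<and>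
     (\<forall>x10\<in>init S1 \<inter> secret S1. \<exists>x20\<in>init S2 \<inter> secret S2. (x10, x20) \<in> R) \<and>
     (\<forall>x20\<in>init S2 - secret S2. \<exists>x10\<in>init S1 - secret S1. (x10, x20) \<in> R) \<and>
     (\<forall>(x1, x2)\<in>R. dist (outmap S1 x1) (outmap S2 x2) \<le> \<epsilon>) \<and>
     (\<forall>(x1, x2)\<in>R.
        (\<forall>u1 x1'. (x1, u1, x1') \<in> trans S1 \<longrightarrow>
           (\<exists>u2 x2'. (x2, u2, x2') \<in> trans S2 \<and> (x1', x2') \<in> R)) \<and>
        (\<forall>u2 x2'. (x2, u2, x2') \<in> trans S2 \<longrightarrow>
           (\<exists>u1 x1'. (x1, u1, x1') \<in> trans S1 \<and> (x1', x2') \<in> R)))"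

definition ISOP_simulates ::
  "('x1, 'u1, 'y::metric_space) system \<Rightarrow> real \<Rightarrow> ('x2, 'u2, 'y) system \<Rightarrow> bool" where
  "ISOP_simulates S1 \<epsilon> S2 \<longleftrightarrow> (\<exists>R. is_ISOP_sim S1 S2 \<epsilon> R)"

end

theory Submission
  imports Defs
begin

text \<open>A secret run of \<open>S\<^sub>b\<close> is
  matched by a secret run of \<open>S\<^sub>a\<close> with outputs \<open>\<epsilon>\<close>-close; opacity of \<open>S\<^sub>a\<close> gives a
  non-secret run \<open>\<delta>\<close>-close to it, and that run is matched back by a non-secret run of
  \<open>S\<^sub>b\<close>, again \<open>\<epsilon>\<close>-close. The triangle inequality bounds the output distance of the two
  runs of \<open>S\<^sub>b\<close> by \<open>\<delta> + 2\<epsilon>\<close>.\<close>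

lemma is_run_Suc:
  "is_run S (Suc n) x u \<longleftrightarrow> is_run S n x u \<and> (x n, u (Suc n), x (Suc n)) \<in> trans S"
  unfolding is_run_def by (auto simp: atLeastAtMostSuc_conv)

lemma is_run_extend:
  assumes "is_run S n x u" and "(x n, v, q) \<in> trans S"
  shows "is_run S (Suc n) (x(Suc n := q)) (u(Suc n := v))"
  using assms unfolding is_run_def by (auto simp: le_Suc_eq)

lemma is_run_lift:
  assumes step: "\<And>p q w p'. (p, q) \<in> R \<Longrightarrow> (p, w, p') \<in> trans S1 \<Longrightarrow>
      \<exists>v q'. (q, v, q') \<in> trans S2 \<and> (p', q') \<in> R"
    and "is_run S1 n x u" and "(x 0, y0) \<in> R"
  obtains y v where "y 0 = y0" "is_run S2 n y v" "\<forall>i\<le>n. (x i, y i) \<in> R"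
  using assms(2)
proof (induction n arbitrary: thesis)
  case 0
  show ?case by (rule "0.prems"(1)[of "\<lambda>_. y0"]) (use assms(3) in \<open>auto simp: is_run_def\<close>)
next
  case (Suc n)
  obtain y v where y: "y 0 = y0" "is_run S2 n y v" "\<forall>i\<le>n. (x i, y i) \<in> R"
    using Suc.IH Suc.prems(2) by (auto simp: is_run_Suc)
  have "(x n, y n) \<in> R" and "(x n, u (Suc n), x (Suc n)) \<in> trans S1"
    using y(3) Suc.prems(2) by (auto simp: is_run_Suc)
  then obtain v' q where q: "(y n, v', q) \<in> trans S2" "(x (Suc n), q) \<in> R"
    using step by blast
  show ?case
  proof (rule Suc.prems(1))
    show "(y(Suc n := q)) 0 = y0" using y(1) by simp
    show "is_run S2 (Suc n) (y(Suc n := q)) (v(Suc n := v'))"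
      using is_run_extend[OF y(2) q(1)] .
    show "\<forall>i\<le>Suc n. (x i, (y(Suc n := q)) i) \<in> R" using y(3) q(2) by (simp add: le_Suc_eq)
  qed
qed

lemma is_ISOP_sim_run_forward:
  assumes "is_ISOP_sim S1 S2 \<epsilon> R" and "is_run S1 n x u" and "(x 0, y0) \<in> R"
  obtains y v where "y 0 = y0" "is_run S2 n y v" "\<forall>i\<le>n. (x i, y i) \<in> R"
proof (rule is_run_lift[OF _ assms(2,3)])
  show "\<exists>v q'. (q, v, q') \<in> trans S2 \<and> (p', q') \<in> R"
    if "(p, q) \<in> R" "(p, w, p') \<in> trans S1" for p q w p'
    using assms(1) that unfolding is_ISOP_sim_def by blast
qed

lemma is_ISOP_sim_run_backward:
  assumes "is_ISOP_sim S1 S2 \<epsilon> R" and "is_run S2 n y v" and "(x0, y 0) \<in> R"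
  obtains x u where "x 0 = x0" "is_run S1 n x u" "\<forall>i\<le>n. (x i, y i) \<in> R"
proof (rule is_run_lift[of "R\<inverse>" S2 S1 n y v x0])
  show "\<exists>u q'. (q, u, q') \<in> trans S1 \<and> (p', q') \<in> R\<inverse>"
    if "(p, q) \<in> R\<inverse>" "(p, w, p') \<in> trans S2" for p q w p'
    using assms(1) that unfolding is_ISOP_sim_def by blast
qed (use assms(2,3) that in auto)

lemma dist_le_via_close:
  fixes a b c d :: "'a::metric_space"
  assumes "dist a c \<le> \<epsilon>" "dist c d \<le> \<delta>" "dist b d \<le> \<epsilon>"
  shows "dist a b \<le> \<delta> + 2 * \<epsilon>"
proof -
  have "dist a b \<le> dist a c + dist c d + dist d b"
    using dist_triangle[of a b c] dist_triangle[of c b d] by linarith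
  then show ?thesis using assms by (simp add: dist_commute)
qed

lemma is_ISOP_sim_transfers_opacity:
  assumes sim: "is_ISOP_sim S1 S2 \<epsilon> R" and opaque: "approx_init_opaque S2 \<delta>"
  shows "approx_init_opaque S1 (\<delta> + 2 * \<epsilon>)"
  unfolding approx_init_opaque_def
proof (intro allI impI)
  fix n x u
  assume secret_run: "x 0 \<in> init S1 \<inter> secret S1 \<and> is_run S1 n x u"
  obtain y0 where y0: "y0 \<in> init S2 \<inter> secret S2" "(x 0, y0) \<in> R"
    using sim secret_run unfolding is_ISOP_sim_def by blast
  obtain y v where y: "y 0 = y0" "is_run S2 n y v" "\<forall>i\<le>n. (x i, y i) \<in> R"
    using is_ISOP_sim_run_forward[OF sim] secret_run y0(2) by blast
  obtain y' v' where y': "y' 0 \<in> init S2 - secret S2" "is_run S2 n y' v'"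
      "\<forall>i\<in>{0..n}. dist (outmap S2 (y i)) (outmap S2 (y' i)) \<le> \<delta>"
    using opaque y y0(1) unfolding approx_init_opaque_def by blast
  obtain x0' where x0': "x0' \<in> init S1 - secret S1" "(x0', y' 0) \<in> R"
    using sim y'(1) unfolding is_ISOP_sim_def by blast
  obtain x' u' where x': "x' 0 = x0'" "is_run S1 n x' u'" "\<forall>i\<le>n. (x' i, y' i) \<in> R"
    using is_ISOP_sim_run_backward[OF sim y'(2) x0'(2)] by blast
  have close: "dist (outmap S1 p) (outmap S2 q) \<le> \<epsilon>" if "(p, q) \<in> R" for p q
    using sim that unfolding is_ISOP_sim_def by blast
  have "\<forall>i\<in>{0..n}. dist (outmap S1 (x i)) (outmap S1 (x' i)) \<le> \<delta> + 2 * \<epsilon>"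
  proof
    fix i assume "i \<in> {0..n}"
    then have "(x i, y i) \<in> R" "dist (outmap S2 (y i)) (outmap S2 (y' i)) \<le> \<delta>"
      and "(x' i, y' i) \<in> R"
      using y(3) x'(3) y'(3) by auto
    then show "dist (outmap S1 (x i)) (outmap S1 (x' i)) \<le> \<delta> + 2 * \<epsilon>"
      by (rule dist_le_via_close[OF close _ close])
  qed
  then show "\<exists>x' u'. x' 0 \<in> init S1 - secret S1 \<and> is_run S1 n x' u' \<and>
      (\<forall>i\<in>{0..n}. dist (outmap S1 (x i)) (outmap S1 (x' i)) \<le> \<delta> + 2 * \<epsilon>)"
    using x' x0'(1) by blast
qed

theorem mainTheorem6:
  fixes Sa :: "('xa, 'ua, 'y::metric_space) system"
    and Sb :: "('xb, 'ub, 'y) system"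
    and \<epsilon> \<delta> :: real
  assumes "wf_system Sa" and "wf_system Sb"
    and "outs Sa = outs Sb"
    and "\<epsilon> \<ge> 0" and "\<delta> \<ge> 0"
    and "ISOP_simulates Sb \<epsilon> Sa"
    and "\<not> approx_init_opaque Sb (\<delta> + 2 * \<epsilon>)"
  shows "\<not> approx_init_opaque Sa \<delta>"
  using assms(6,7) is_ISOP_sim_transfers_opacity unfolding ISOP_simulates_def by blast

end
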